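(* Fix integers $0\le p<q$. The span of the elements $\mathbf S^f$ of $\mathbf{EFSym}$ with $f:[n]\to[n]$ ($n\ge0$) satisfying $f^p=f^q$ (powers under composition) is a Hopf subalgebra of $\mathbf{EFSym}$. In particular, the $\mathbf S^f$ with $f$ idempotent span a Hopf subalgebra.
   Context: $\mathbf{EFSym}$: over $A=\{a_{ij}:i\ne j,\ i,j\ge1\}$ with $a_{ij}\prec a_{kl}$ iff $j=k$, for $f:[n]\to[n]$, $\mathbf S^f$ is the sum of words $w_1\cdots w_n$ over $A$ with $w_{f(j)}\prec w_j$ whenever $f(j)\ne j$; the $\mathbf S^f$ are linearly independent and span $\mathbf{EFSym}$, with product $\mathbf S^f\mathbf S^g=\mathbf S^{f\bullet g}$ (shifted concatenation: $i\mapsto f(i)$ for $i\le n$, $n+i\mapsto g(i)+n$) and coproduct $\Delta\mathbf S^f=\sum_{I\models f}\mathbf S^{\mathrm{std}(f^{[n]\setminus I})}\otimes\mathbf S^{\mathrm{std}(f^I)}$, where $I\models f$ means $f^{-1}(I)\subseteq I$, $f^I(x)=f(x)$ if $f(x)\in I$ and $x$ otherwise, and $\mathrm{std}$ conjugates by the increasing bijection $I\to[|I|]$. $f^0$ is the identity. *)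

theory Defs
  imports "HOL-Library.Poly_Mapping"
begin

text \<open>Maps f : [n] -> [n] are encoded as lists of length n, 0-indexed:
  [n] = {0..<n}, f(i) = f ! i.  (Standardisation is order preserving,
  so the shift from {1..n} to {0..<n} is harmless.)\<close>

definition is_map :: "nat list \<Rightarrow> bool" where
  "is_map f \<longleftrightarrow> (\<forall>x\<in>set f. x < length f)"

definition Maps :: "nat list set" where
  "Maps = {f. is_map f}"

fun fpow :: "nat list \<Rightarrow> nat \<Rightarrow> nat list" where
  "fpow f 0 = [0..<length f]"
| "fpow f (Suc k) = map (\<lambda>j. f ! j) (fpow f k)"

definition shconc :: "nat list \<Rightarrow> nat list \<Rightarrow> nat list" where
  "shconc f g = f @ map (\<lambda>x. x + length f) g"

definition admissible :: "nat set \<Rightarrow> nat list \<Rightarrow> bool" where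
  "admissible I f \<longleftrightarrow> I \<subseteq> {0..<length f} \<and> (\<forall>x<length f. f ! x \<in> I \<longrightarrow> x \<in> I)"

text \<open>std(f^I): f^I(x) = f(x) if f(x) \<in> I, else x, for x \<in> I; then conjugate by
  the increasing bijection I -> {0..<card I}.\<close>
definition restr_std :: "nat list \<Rightarrow> nat set \<Rightarrow> nat list" where
  "restr_std f I = map (\<lambda>x. card {y\<in>I. y < (if f ! x \<in> I then f ! x else x)})
                      (sorted_list_of_set I)"

text \<open>EFSym is modelled via its basis: an element is a finitely supported
  coefficient function on maps (S^f = basis_el f); the tensor square
  has basis S^f \<otimes> S^g, indexed by pairs.\<close>

definition basis_el :: "nat list \<Rightarrow> (nat list \<Rightarrow>\<^sub>0 'k::comm_ring_1)" where
  "basis_el f = Poly_Mapping.single f 1"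

definition ef_one :: "nat list \<Rightarrow>\<^sub>0 'k::comm_ring_1" where
  "ef_one = basis_el []"

definition scale :: "'k::comm_ring_1 \<Rightarrow> ('a \<Rightarrow>\<^sub>0 'k) \<Rightarrow> ('a \<Rightarrow>\<^sub>0 'k)" where
  "scale c x = Poly_Mapping.map (\<lambda>v. c * v) x"

definition lin_ext :: "('a \<Rightarrow> ('b \<Rightarrow>\<^sub>0 'k::comm_ring_1)) \<Rightarrow> ('a \<Rightarrow>\<^sub>0 'k) \<Rightarrow> ('b \<Rightarrow>\<^sub>0 'k)" where
  "lin_ext \<phi> x = (\<Sum>a\<in>Poly_Mapping.keys x. scale (Poly_Mapping.lookup x a) (\<phi> a))"

definition ef_mult :: "(nat list \<Rightarrow>\<^sub>0 'k::comm_ring_1) \<Rightarrow> (nat list \<Rightarrow>\<^sub>0 'k) \<Rightarrow> (nat list \<Rightarrow>\<^sub>0 'k)" where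
  "ef_mult x y = (\<Sum>f\<in>Poly_Mapping.keys x. \<Sum>g\<in>Poly_Mapping.keys y. Poly_Mapping.single (shconc f g) (Poly_Mapping.lookup x f * Poly_Mapping.lookup y g))"

definition coprod_basis :: "nat list \<Rightarrow> (nat list \<times> nat list \<Rightarrow>\<^sub>0 'k::comm_ring_1)" where
  "coprod_basis f = (\<Sum>I\<in>{I. admissible I f}.
      Poly_Mapping.single (restr_std f ({0..<length f} - I), restr_std f I) 1)"

definition ef_coprod :: "(nat list \<Rightarrow>\<^sub>0 'k::comm_ring_1) \<Rightarrow> (nat list \<times> nat list \<Rightarrow>\<^sub>0 'k)" where
  "ef_coprod x = lin_ext coprod_basis x"

definition ef_counit_basis :: "nat list \<Rightarrow> 'k::comm_ring_1" where
  "ef_counit_basis f = (if f = [] then 1 else 0)"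

text \<open>An antipode, given by its values s f = S(S^f) on the basis (extended
  linearly): m (S \<otimes> id) \<Delta> = \<eta> \<epsilon> = m (id \<otimes> S) \<Delta> on every basis element.\<close>
definition is_antipode :: "(nat list \<Rightarrow> (nat list \<Rightarrow>\<^sub>0 'k::comm_ring_1)) \<Rightarrow> bool" where
  "is_antipode s \<longleftrightarrow> (\<forall>f\<in>Maps.
     (\<Sum>gh\<in>Poly_Mapping.keys (coprod_basis f :: nat list \<times> nat list \<Rightarrow>\<^sub>0 'k).
         scale (Poly_Mapping.lookup (coprod_basis f) gh) (ef_mult (s (fst gh)) (basis_el (snd gh))))
       = scale (ef_counit_basis f) ef_one
   \<and> (\<Sum>gh\<in>Poly_Mapping.keys (coprod_basis f :: nat list \<times> nat list \<Rightarrow>\<^sub>0 'k).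
         scale (Poly_Mapping.lookup (coprod_basis f) gh) (ef_mult (basis_el (fst gh)) (s (snd gh))))
       = scale (ef_counit_basis f) ef_one)"

definition ef_span :: "nat list set \<Rightarrow> (nat list \<Rightarrow>\<^sub>0 'k::comm_ring_1) set" where
  "ef_span B = {x. Poly_Mapping.keys x \<subseteq> B}"

text \<open>Closure under linear combinations is automatic.\<close>
definition hopf_subalg_spanned :: "'k::comm_ring_1 itself \<Rightarrow> nat list set \<Rightarrow> bool" where
  "hopf_subalg_spanned _ B \<longleftrightarrow>
     B \<subseteq> Maps
   \<and> (ef_one :: nat list \<Rightarrow>\<^sub>0 'k) \<in> ef_span B
   \<and> (\<forall>x\<in>(ef_span B :: (nat list \<Rightarrow>\<^sub>0 'k) set). \<forall>y\<in>ef_span B. ef_mult x y \<in> ef_span B)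
   \<and> (\<forall>x\<in>(ef_span B :: (nat list \<Rightarrow>\<^sub>0 'k) set). Poly_Mapping.keys (ef_coprod x) \<subseteq> B \<times> B)
   \<and> (\<forall>s :: nat list \<Rightarrow> (nat list \<Rightarrow>\<^sub>0 'k). is_antipode s \<longrightarrow>
        (\<forall>x\<in>ef_span B. lin_ext s x \<in> ef_span B))"

end

theory Submission imports Defs begin

(* Write B(p,q) for the set of maps f with f^p = f^q (p <= q
   suffices).  Concatenation is harmless since the iterates
   of f \<bullet> g act blockwise.  Since std only relabels a set increasingly, the
   iterates of std(f^J) are the iterates of f^J read through the rank function
   of J.  On the forward-closed complement [n]-I the map f^([n]-I) is f itself;
   on the backward-closed set I an f-orbit that leaves I never returns, so the
   f^I-orbit either follows the f-orbit for q steps or halts at its last point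
   in I before step p.  A general criterion then shows that such a family spans
   a Hopf subalgebra: unit, products and coproducts stay in the span, and any
   antipode s maps it into itself by induction on n, solving the antipode
   equation for s(S^f), since all other coproduct terms of S^f have a strictly
   shorter left factor.  The idempotent maps are exactly B(1,2). *)

lemma lookup_scale: "Poly_Mapping.lookup (scale c x) k = c * Poly_Mapping.lookup x k"
  unfolding scale_def by (simp add: Poly_Mapping.map.rep_eq when_def)

lemma keys_scale: "Poly_Mapping.keys (scale c x) \<subseteq> Poly_Mapping.keys x"
  by (auto simp: in_keys_iff lookup_scale)

lemma span_single: "k \<in> B \<Longrightarrow> Poly_Mapping.single k c \<in> ef_span B"
  by (auto simp: ef_span_def)

lemma span_diff: "x \<in> ef_span B \<Longrightarrow> y \<in> ef_span B \<Longrightarrow> x - y \<in> ef_span B"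
  using keys_add[of x "- y"] by (auto simp: ef_span_def in_keys_iff)

lemma span_scale: "x \<in> ef_span B \<Longrightarrow> scale c x \<in> ef_span B"
  using keys_scale[of c x] by (auto simp: ef_span_def)

lemma span_sum: "(\<And>a. a \<in> A \<Longrightarrow> F a \<in> ef_span B) \<Longrightarrow> sum F A \<in> ef_span B"
proof (induction A rule: infinite_finite_induct)
  case (insert a A)
  then show ?case using keys_add[of "F a" "sum F A"] by (auto simp: ef_span_def)
qed (auto simp: ef_span_def)

lemma span_lin_ext:
  "(\<And>a. a \<in> Poly_Mapping.keys x \<Longrightarrow> s a \<in> ef_span B) \<Longrightarrow> lin_ext s x \<in> ef_span B"
  unfolding lin_ext_def by (intro span_sum span_scale)

lemma span_mult:
  assumes "x \<in> ef_span B" "y \<in> ef_span B"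
    and "\<And>f g. f \<in> B \<Longrightarrow> g \<in> B \<Longrightarrow> shconc f g \<in> B"
  shows "ef_mult x y \<in> ef_span B"
  unfolding ef_mult_def
  by (intro span_sum span_single) (use assms in \<open>auto simp: ef_span_def\<close>)

lemma ef_mult_one_right: "ef_mult x (basis_el []) = x"
proof -
  have "ef_mult x (basis_el []) =
      (\<Sum>f\<in>Poly_Mapping.keys x. Poly_Mapping.single f (Poly_Mapping.lookup x f))"
    by (simp add: ef_mult_def basis_el_def shconc_def)
  also have "\<dots> = x"
    by (rule poly_mapping_eqI) (auto simp: lookup_sum lookup_single when_def in_keys_iff
        intro: sum.delta'[THEN trans])
  finally show ?thesis .
qed

lemma is_map_iff: "is_map f \<longleftrightarrow> (\<forall>x<length f. f ! x < length f)"
  by (auto simp: is_map_def in_set_conv_nth) (use nth_mem in blast)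

lemma is_map_nth_less: "is_map f \<Longrightarrow> x < length f \<Longrightarrow> f ! x < length f"
  by (simp add: is_map_iff)

lemma fpow_eq_iff:
  "fpow f p = fpow f q \<longleftrightarrow> (\<forall>x<length f. ((!) f ^^ p) x = ((!) f ^^ q) x)"
proof -
  have "fpow f k = map ((!) f ^^ k) [0..<length f]" for k
    by (induction k) auto
  then show ?thesis by (auto simp: map_eq_conv)
qed

lemma funpow_range: "(\<And>x. x < n \<Longrightarrow> F x < n) \<Longrightarrow> x < n \<Longrightarrow> (F ^^ k) x < n"
  by (induction k) auto

definition pq_maps :: "nat \<Rightarrow> nat \<Rightarrow> nat list set" where
  "pq_maps p q = {f \<in> Maps. fpow f p = fpow f q}"

lemma pq_maps_iff:
  "f \<in> pq_maps p q \<longleftrightarrow> is_map f \<and> (\<forall>x<length f. ((!) f ^^ p) x = ((!) f ^^ q) x)"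
  by (simp add: pq_maps_def Maps_def fpow_eq_iff)

lemma idempotent_maps_eq: "{f \<in> Maps. \<forall>i<length f. f ! (f ! i) = f ! i} = pq_maps 1 2"
  by (auto simp: pq_maps_iff Maps_def numeral_2_eq_2)

lemma shconc_nth: "i < length f + length g \<Longrightarrow>
   shconc f g ! i = (if i < length f then f ! i else g ! (i - length f) + length f)"
  by (auto simp: shconc_def nth_append)

lemma shconc_is_map:
  assumes "is_map f" "is_map g"
  shows "is_map (shconc f g)"
  unfolding is_map_iff
proof (intro allI impI)
  fix x assume "x < length (shconc f g)"
  then have x: "x < length f + length g" by (simp add: shconc_def)
  then have "shconc f g ! x < length f + length g"
    using is_map_nth_less[OF assms(1), of x] is_map_nth_less[OF assms(2), of "x - length f"]
    by (cases "x < length f") (auto simp: shconc_nth[OF x])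
  then show "shconc f g ! x < length (shconc f g)" by (simp add: shconc_def)
qed

lemma shconc_funpow:
  assumes "is_map f" "is_map g" "i < length f + length g"
  shows "((!) (shconc f g) ^^ k) i =
     (if i < length f then ((!) f ^^ k) i else ((!) g ^^ k) (i - length f) + length f)"
proof (induction k)
  case (Suc k)
  show ?case
  proof (cases "i < length f")
    case True
    have "((!) f ^^ k) i < length f" using funpow_range[OF is_map_nth_less[OF assms(1)] True] .
    then show ?thesis using Suc True by (simp add: shconc_nth)
  next
    case False
    have "((!) g ^^ k) (i - length f) < length g"
      by (rule funpow_range[OF is_map_nth_less[OF assms(2)]]) (use assms False in auto)
    then show ?thesis using Suc False by (simp add: shconc_nth)
  qed
qed simp

lemma shconc_pq_maps:
  assumes f: "f \<in> pq_maps p q" and g: "g \<in> pq_maps p q"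
  shows "shconc f g \<in> pq_maps p q"
proof -
  have f': "is_map f" and fpq: "\<And>x. x < length f \<Longrightarrow> ((!) f ^^ p) x = ((!) f ^^ q) x"
    using f by (auto simp: pq_maps_iff)
  have g': "is_map g" and gpq: "\<And>x. x < length g \<Longrightarrow> ((!) g ^^ p) x = ((!) g ^^ q) x"
    using g by (auto simp: pq_maps_iff)
  show ?thesis
    unfolding pq_maps_iff
  proof (intro conjI allI impI)
    show "is_map (shconc f g)" using shconc_is_map[OF f' g'] .
    fix x assume "x < length (shconc f g)"
    then have x: "x < length f + length g" by (simp add: shconc_def)
    show "((!) (shconc f g) ^^ p) x = ((!) (shconc f g) ^^ q) x"
    proof (cases "x < length f")
      case True
      then show ?thesis by (simp add: shconc_funpow[OF f' g' x] fpq)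
    next
      case False
      then have "x - length f < length g" using x by simp
      then show ?thesis using False by (simp add: shconc_funpow[OF f' g' x] gpq)
    qed
  qed
qed

subsection \<open>Restriction and standardisation\<close>

definition restrict_to :: "(nat \<Rightarrow> nat) \<Rightarrow> nat set \<Rightarrow> nat \<Rightarrow> nat" where
  "restrict_to F I x = (if F x \<in> I then F x else x)"

definition rank :: "nat set \<Rightarrow> nat \<Rightarrow> nat" where
  "rank J y = card {z\<in>J. z < y}"

lemma rank_nth:
  assumes "finite J" "i < card J"
  shows "rank J (sorted_list_of_set J ! i) = i"
proof -
  define xs where "xs = sorted_list_of_set J"
  have ss: "sorted_wrt (<) xs" and set_xs: "set xs = J" and lx: "length xs = card J"
    and dx: "distinct xs"
    using assms by (auto simp: xs_def)
  have less_iff: "xs ! j < xs ! i \<longleftrightarrow> j < i" if "j < length xs" for j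
    using sorted_wrt_nth_less[OF ss] that assms lx by (metis not_less_iff_gr_or_eq order.asym)
  have "{z\<in>J. z < xs ! i} = (!) xs ` {..<i}"
  proof (intro equalityI subsetI)
    fix z assume "z \<in> {z\<in>J. z < xs ! i}"
    then obtain j where "j < length xs" "z = xs ! j" "xs ! j < xs ! i"
      by (auto simp: set_xs[symmetric] in_set_conv_nth)
    then show "z \<in> (!) xs ` {..<i}" using less_iff by auto
  next
    fix z assume "z \<in> (!) xs ` {..<i}"
    then obtain j where "j < i" "z = xs ! j" by auto
    moreover have "j < length xs" using \<open>j < i\<close> assms lx by simp
    ultimately show "z \<in> {z\<in>J. z < xs ! i}"
      using less_iff nth_mem[of j xs] by (auto simp: set_xs)
  qed
  moreover have "inj_on ((!) xs) {..<i}"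
    using dx assms lx by (auto simp: inj_on_def nth_eq_iff_index_eq)
  ultimately show ?thesis by (simp add: rank_def xs_def card_image)
qed

lemma rank_mem:
  assumes "finite J" "y \<in> J"
  shows "rank J y < card J" "sorted_list_of_set J ! rank J y = y"
proof -
  obtain i where "i < card J" "y = sorted_list_of_set J ! i"
    using assms by (metis in_set_conv_nth length_sorted_list_of_set set_sorted_list_of_set)
  then show "rank J y < card J" "sorted_list_of_set J ! rank J y = y"
    using rank_nth[OF assms(1)] by auto
qed

lemma sorted_list_of_set_nth_mem: "finite J \<Longrightarrow> i < card J \<Longrightarrow> sorted_list_of_set J ! i \<in> J"
  by (metis length_sorted_list_of_set nth_mem set_sorted_list_of_set)

lemma restr_std_funpow:
  assumes fin: "finite J"
  shows "length (restr_std f J) = card J"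
    and "is_map (restr_std f J)"
    and "i < card J \<Longrightarrow> ((!) (restr_std f J) ^^ k) i
           = rank J ((restrict_to ((!) f) J ^^ k) (sorted_list_of_set J ! i))"
proof -
  let ?g = "restrict_to ((!) f) J" and ?xs = "sorted_list_of_set J"
  have gJ: "x \<in> J \<Longrightarrow> (?g ^^ k) x \<in> J" for x k
    by (induction k) (auto simp: restrict_to_def)
  have nth: "i < card J \<Longrightarrow> restr_std f J ! i = rank J (?g (?xs ! i))" for i
    by (simp add: restr_std_def rank_def restrict_to_def)
  show l: "length (restr_std f J) = card J" by (simp add: restr_std_def)
  show "is_map (restr_std f J)"
    unfolding is_map_iff l
    using nth rank_mem[OF fin] gJ[of _ 1] sorted_list_of_set_nth_mem[OF fin] by auto
  show "i < card J \<Longrightarrow> ((!) (restr_std f J) ^^ k) i = rank J ((?g ^^ k) (?xs ! i))"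
  proof (induction k)
    case 0 then show ?case using rank_nth[OF fin] by simp
  next
    case (Suc k)
    have "(?g ^^ k) (?xs ! i) \<in> J" using gJ sorted_list_of_set_nth_mem[OF fin Suc.prems] by blast
    then show ?case using Suc rank_mem[OF fin] nth by simp
  qed
qed

lemma restr_std_pq_maps:
  assumes "finite J" and "\<And>x. x \<in> J \<Longrightarrow> (restrict_to ((!) f) J ^^ p) x = (restrict_to ((!) f) J ^^ q) x"
  shows "restr_std f J \<in> pq_maps p q"
proof -
  have "((!) (restr_std f J) ^^ p) i = ((!) (restr_std f J) ^^ q) i" if "i < card J" for i
    using restr_std_funpow(3)[OF assms(1) that]
      assms(2)[OF sorted_list_of_set_nth_mem[OF assms(1) that]] by simp
  then show ?thesis using restr_std_funpow(1,2)[OF assms(1)] by (simp add: pq_maps_iff)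
qed

subsection \<open>Dynamics of the restricted maps\<close>

lemma restrict_to_funpow_closed:
  assumes closed: "\<And>y. y \<in> J \<Longrightarrow> F y \<in> J" and "x \<in> J"
  shows "(restrict_to F J ^^ k) x = (F ^^ k) x"
proof -
  have "(restrict_to F J ^^ k) x = (F ^^ k) x \<and> (F ^^ k) x \<in> J"
    by (induction k) (use assms in \<open>auto simp: restrict_to_def\<close>)
  then show ?thesis ..
qed

lemma orbit_stays_outside:
  assumes maps_to: "\<And>y. y < n \<Longrightarrow> F y < n"
    and preimage: "\<And>y. y < n \<Longrightarrow> F y \<in> I \<Longrightarrow> y \<in> I"
    and "x < n" "(F ^^ m) x \<notin> I" "m \<le> k"
  shows "(F ^^ k) x \<notin> I"
  using \<open>m \<le> k\<close>
proof (induction k rule: dec_induct)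
  case (step k)
  then show ?case using preimage[of "(F ^^ k) x"] funpow_range[OF maps_to \<open>x < n\<close>] by auto
qed (use assms in simp)

lemma restrict_to_funpow_follows:
  assumes "\<And>j. 0 < j \<Longrightarrow> j \<le> k \<Longrightarrow> (F ^^ j) x \<in> I"
  shows "(restrict_to F I ^^ k) x = (F ^^ k) x"
  using assms
proof (induction k)
  case (Suc k)
  then have "F ((F ^^ k) x) \<in> I" using Suc.prems[of "Suc k"] by simp
  then show ?case using Suc by (simp add: restrict_to_def)
qed simp

text \<open>Either the orbit stays in I up to step q, or it leaves I
  for good before step p and the restricted orbit stops at its last point in I.\<close>

lemma restrict_to_funpow_backward:
  assumes maps_to: "\<And>y. y < n \<Longrightarrow> F y < n"
    and preimage: "\<And>y. y < n \<Longrightarrow> F y \<in> I \<Longrightarrow> y \<in> I"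
    and pq: "\<And>y. y < n \<Longrightarrow> (F ^^ p) y = (F ^^ q) y" and "p \<le> q"
    and "I \<subseteq> {..<n}" and x: "x \<in> I"
  shows "(restrict_to F I ^^ p) x = (restrict_to F I ^^ q) x"
proof -
  let ?g = "restrict_to F I"
  have xn: "x < n" using assms by auto
  show ?thesis
  proof (cases "(F ^^ q) x \<in> I")
    case True
    then have "(F ^^ j) x \<in> I" if "j \<le> q" for j
      using orbit_stays_outside[of n F I x j q, OF maps_to preimage xn] that by blast
    then have "(?g ^^ k) x = (F ^^ k) x" if "k \<le> q" for k
      using that by (intro restrict_to_funpow_follows) auto
    then show ?thesis using pq[OF xn] \<open>p \<le> q\<close> by simp
  next
    case False
    then have "(F ^^ p) x \<notin> I" using pq[OF xn] by simp
    then obtain m where "m < p" and inside: "\<And>j. j \<le> m \<Longrightarrow> (F ^^ j) x \<in> I"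
      and exit: "(F ^^ Suc m) x \<notin> I"
      using ex_least_nat_less[of "\<lambda>j. (F ^^ j) x \<notin> I" p] x by auto
    have start: "(?g ^^ m) x = (F ^^ m) x"
      using inside by (intro restrict_to_funpow_follows) auto
    have stop: "?g ((F ^^ m) x) = (F ^^ m) x"
      using exit by (simp add: restrict_to_def)
    have "(?g ^^ (m + d)) x = (F ^^ m) x" for d
      by (induction d) (use start stop in auto)
    then have "(?g ^^ k) x = (F ^^ m) x" if "m \<le> k" for k
      using that by (metis le_add_diff_inverse)
    then show ?thesis using \<open>m < p\<close> \<open>p \<le> q\<close> by simp
  qed
qed

lemma Nil_pq_maps: "[] \<in> pq_maps p q"
  by (simp add: pq_maps_iff is_map_def)

lemma restr_std_admissible_pq_maps:
  assumes f: "f \<in> pq_maps p q" and "p \<le> q" and adm: "admissible I f"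
  shows "restr_std f I \<in> pq_maps p q" "restr_std f ({0..<length f} - I) \<in> pq_maps p q"
proof -
  have maps_to: "\<And>x. x < length f \<Longrightarrow> f ! x < length f"
    and fpq: "\<And>x. x < length f \<Longrightarrow> ((!) f ^^ p) x = ((!) f ^^ q) x"
    using f by (auto simp: pq_maps_iff is_map_iff)
  have I: "I \<subseteq> {..<length f}" and preimage: "\<And>x. x < length f \<Longrightarrow> f ! x \<in> I \<Longrightarrow> x \<in> I"
    using adm by (auto simp: admissible_def)
  show "restr_std f I \<in> pq_maps p q"
    using restrict_to_funpow_backward[of "length f" "(!) f" I p q, OF maps_to preimage fpq \<open>p \<le> q\<close> I]
    by (intro restr_std_pq_maps finite_subset[OF I]) auto
  let ?J = "{0..<length f} - I"
  have closed: "\<And>x. x \<in> ?J \<Longrightarrow> f ! x \<in> ?J" using preimage maps_to by auto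
  show "restr_std f ?J \<in> pq_maps p q"
    using restrict_to_funpow_closed[OF closed] fpq by (intro restr_std_pq_maps) auto
qed

lemma keys_coprod_basis:
  "Poly_Mapping.keys (coprod_basis f :: nat list \<times> nat list \<Rightarrow>\<^sub>0 'k::comm_ring_1)
     \<subseteq> (\<lambda>I. (restr_std f ({0..<length f} - I), restr_std f I)) ` {I. admissible I f}"
  unfolding coprod_basis_def using keys_sum by fastforce

lemma restr_std_empty: "restr_std f {} = []"
  by (simp add: restr_std_def)

lemma restr_std_full: "is_map f \<Longrightarrow> restr_std f {0..<length f} = f"
proof -
  assume "is_map f"
  then have "f ! x < length f" if "x < length f" for x
    using that by (rule is_map_nth_less)
  moreover have "{z. z < length f \<and> z < y} = {..<y}" if "y < length f" for y
    using that by auto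
  ultimately show ?thesis by (intro nth_equalityI) (auto simp: restr_std_def)
qed

lemma lookup_coprod_basis_primitive:
  assumes "is_map f"
  shows "Poly_Mapping.lookup (coprod_basis f :: nat list \<times> nat list \<Rightarrow>\<^sub>0 'k::comm_ring_1) (f, []) = 1"
proof -
  have fin: "finite {I. admissible I f}"
    by (rule finite_subset[of _ "Pow {0..<length f}"]) (auto simp: admissible_def)
  have "(restr_std f ({0..<length f} - I), restr_std f I) = (f, []) \<longleftrightarrow> I = {}"
    if "admissible I f" for I
  proof
    assume "(restr_std f ({0..<length f} - I), restr_std f I) = (f, [])"
    moreover have "finite I" using that finite_subset by (auto simp: admissible_def)
    ultimately show "I = {}" using restr_std_funpow(1)[of I f] by auto
  qed (simp add: restr_std_empty restr_std_full[OF assms])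
  then have "Poly_Mapping.lookup (coprod_basis f :: nat list \<times> nat list \<Rightarrow>\<^sub>0 'k) (f, [])
      = (\<Sum>I\<in>{I. admissible I f}. if I = {} then 1 else 0)"
    unfolding coprod_basis_def lookup_sum lookup_single when_def by (intro sum.cong) auto
  also have "\<dots> = 1" using fin by (simp add: admissible_def)
  finally show ?thesis .
qed

lemma coprod_basis_other_terms:
  assumes "is_map f"
    and "gh \<in> Poly_Mapping.keys (coprod_basis f :: nat list \<times> nat list \<Rightarrow>\<^sub>0 'k::comm_ring_1)"
    and "gh \<noteq> (f, [])"
  obtains I where "admissible I f" "gh = (restr_std f ({0..<length f} - I), restr_std f I)"
    and "length (fst gh) < length f"
proof -
  obtain I where I: "admissible I f" "gh = (restr_std f ({0..<length f} - I), restr_std f I)"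
    using assms(2) keys_coprod_basis by blast
  have sub: "I \<subseteq> {0..<length f}" using I by (simp add: admissible_def)
  then have "finite I" by (rule finite_subset) simp
  moreover have "I \<noteq> {}"
    using I assms(3) restr_std_full[OF assms(1)] restr_std_empty by auto
  ultimately have "card I > 0" by (simp add: card_gt_0_iff)
  moreover have "length (fst gh) = length f - card I"
    using I \<open>finite I\<close> sub by (simp add: restr_std_funpow(1) card_Diff_subset)
  moreover have "card I \<le> length f" using card_mono[OF _ sub] by simp
  ultimately show ?thesis using I that by auto
qed

subsection \<open>A criterion for Hopf subalgebras\<close>

locale coproduct_closed_family =
  fixes B :: "nat list set"
  assumes maps: "B \<subseteq> Maps" and Nil: "[] \<in> B"
    and shconc: "\<And>f g. f \<in> B \<Longrightarrow> g \<in> B \<Longrightarrow> shconc f g \<in> B"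
    and restr: "\<And>f I. f \<in> B \<Longrightarrow> admissible I f \<Longrightarrow> restr_std f I \<in> B"
    and restr_compl: "\<And>f I. f \<in> B \<Longrightarrow> admissible I f \<Longrightarrow> restr_std f ({0..<length f} - I) \<in> B"
begin

lemma one_in_span: "(ef_one :: nat list \<Rightarrow>\<^sub>0 'k::comm_ring_1) \<in> ef_span B"
  using Nil by (simp add: ef_one_def basis_el_def span_single)

lemma keys_coprod_basis_in:
  "f \<in> B \<Longrightarrow> Poly_Mapping.keys (coprod_basis f :: nat list \<times> nat list \<Rightarrow>\<^sub>0 'k::comm_ring_1) \<subseteq> B \<times> B"
  using keys_coprod_basis[of f] restr restr_compl by fastforce

text \<open>Any antipode s maps S^f, f \<in> B, into the span: the left antipode equation
  expresses s(S^f) = s(S^f) S^[] through s applied to strictly shorter maps of B.\<close>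

lemma antipode_in_span:
  assumes s: "is_antipode (s :: nat list \<Rightarrow> (nat list \<Rightarrow>\<^sub>0 'k::comm_ring_1))"
  shows "f \<in> B \<Longrightarrow> s f \<in> ef_span B"
proof (induction "length f" arbitrary: f rule: less_induct)
  case less
  define cb where "cb = (coprod_basis f :: nat list \<times> nat list \<Rightarrow>\<^sub>0 'k)"
  define T where "T gh = scale (Poly_Mapping.lookup cb gh) (ef_mult (s (fst gh)) (basis_el (snd gh)))"
    for gh
  have f: "is_map f" "f \<in> Maps" using less.prems maps by (auto simp: Maps_def)
  have prim: "Poly_Mapping.lookup cb (f, []) = 1"
    unfolding cb_def by (rule lookup_coprod_basis_primitive[OF f(1)])
  then have key: "(f, []) \<in> Poly_Mapping.keys cb" by (simp add: in_keys_iff)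
  have "sum T (Poly_Mapping.keys cb) = scale (ef_counit_basis f) ef_one"
    using s f(2) unfolding is_antipode_def T_def cb_def by blast
  moreover have "T (f, []) = s f"
    by (rule poly_mapping_eqI) (simp add: T_def prim lookup_scale ef_mult_one_right)
  ultimately have sf: "s f = scale (ef_counit_basis f) ef_one - sum T (Poly_Mapping.keys cb - {(f, [])})"
    using sum.remove[OF finite_keys key, of T] by (simp add: algebra_simps)
  have "T gh \<in> ef_span B" if gh: "gh \<in> Poly_Mapping.keys cb - {(f, [])}" for gh
  proof -
    obtain I where I: "admissible I f" "gh = (restr_std f ({0..<length f} - I), restr_std f I)"
      and shorter: "length (fst gh) < length f"
      using coprod_basis_other_terms[OF f(1)] gh unfolding cb_def by blast
    have "fst gh \<in> B" "snd gh \<in> B" using I restr restr_compl less.prems by auto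
    then have "s (fst gh) \<in> ef_span B" "basis_el (snd gh) \<in> ef_span B"
      using less.hyps[OF shorter] by (auto simp: basis_el_def span_single)
    then show ?thesis unfolding T_def by (intro span_scale span_mult shconc)
  qed
  then show ?case unfolding sf by (intro span_diff span_scale one_in_span span_sum)
qed

theorem hopf_subalgebra: "hopf_subalg_spanned TYPE('k::comm_ring_1) B"
  unfolding hopf_subalg_spanned_def
proof (intro conjI ballI allI impI)
  show "B \<subseteq> Maps" by (rule maps)
  show "(ef_one :: nat list \<Rightarrow>\<^sub>0 'k) \<in> ef_span B" by (rule one_in_span)
  show "ef_mult x y \<in> ef_span B" if "x \<in> (ef_span B :: (nat list \<Rightarrow>\<^sub>0 'k) set)" "y \<in> ef_span B"
    for x y
    using that by (intro span_mult shconc)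
  show "Poly_Mapping.keys (ef_coprod x) \<subseteq> B \<times> B" if "x \<in> (ef_span B :: (nat list \<Rightarrow>\<^sub>0 'k) set)"
    for x
  proof -
    have "Poly_Mapping.keys (ef_coprod x) \<subseteq> (\<Union>a\<in>Poly_Mapping.keys x.
        Poly_Mapping.keys (scale (Poly_Mapping.lookup x a) (coprod_basis a :: _ \<Rightarrow>\<^sub>0 'k)))"
      unfolding ef_coprod_def lin_ext_def by (rule keys_sum)
    also have "\<dots> \<subseteq> B \<times> B"
      using that keys_scale keys_coprod_basis_in by (fastforce simp: ef_span_def)
    finally show ?thesis .
  qed
  show "lin_ext s x \<in> ef_span B"
    if "is_antipode (s :: nat list \<Rightarrow> (nat list \<Rightarrow>\<^sub>0 'k))" "x \<in> ef_span B" for s x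
    using that by (intro span_lin_ext antipode_in_span) (auto simp: ef_span_def)
qed

end

lemma pq_maps_coproduct_closed:
  assumes "p \<le> q"
  shows "coproduct_closed_family (pq_maps p q)"
proof
  show "pq_maps p q \<subseteq> Maps" by (auto simp: pq_maps_def)
qed (use assms in \<open>auto intro: Nil_pq_maps shconc_pq_maps restr_std_admissible_pq_maps\<close>)

theorem mainTheorem15:
  fixes p q :: nat
  assumes "p < q"
  shows "hopf_subalg_spanned TYPE('k::field) {f \<in> Maps. fpow f p = fpow f q}
       \<and> hopf_subalg_spanned TYPE('k::field) {f \<in> Maps. \<forall>i<length f. f ! (f ! i) = f ! i}"
proof -
  have "coproduct_closed_family (pq_maps p q)" "coproduct_closed_family (pq_maps 1 2)"
    using assms by (simp_all add: pq_maps_coproduct_closed)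
  then have "hopf_subalg_spanned TYPE('k) (pq_maps p q)" "hopf_subalg_spanned TYPE('k) (pq_maps 1 2)"
    using coproduct_closed_family.hopf_subalgebra by blast+
  then show ?thesis unfolding idempotent_maps_eq by (simp add: pq_maps_def)
qed

end
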